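(* Let $G=\{1,\rho\}\le S_n$ be a 2-element subgroup whose non-identity element $\rho$ is a product of pairwise disjoint transpositions. Then $B_n/G$ is a symmetric chain order.
   Context: A finite poset $P$ is ranked if it has a minimum element and all saturated chains from the minimum to any $x$ have the same length $r(x)$; $r(P)=\max_x r(x)$. A chain $x_1<\dots<x_k$ is symmetric if it is saturated and $r(x_1)+r(x_k)=r(P)$; a symmetric chain order (SCO) is a ranked poset that can be partitioned into symmetric chains. $B_n$ is the Boolean lattice of subsets of $[n]$; $S_n$ acts by $\sigma(A)=\sigma[A]$, and for $G\le S_n$, $B_n/G$ is the poset of $G$-orbits $[A]$ with $[A]\le[B]$ iff $X\subseteq Y$ for some $X\in[A]$, $Y\in[B]$. *)

theory Defs
  imports Main "HOL-Combinatorics.Permutations"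
begin

definition poset_on :: "'a set \<Rightarrow> ('a \<Rightarrow> 'a \<Rightarrow> bool) \<Rightarrow> bool" where
  "poset_on P le \<longleftrightarrow>
     (\<forall>x\<in>P. le x x) \<and>
     (\<forall>x\<in>P. \<forall>y\<in>P. le x y \<and> le y x \<longrightarrow> x = y) \<and>
     (\<forall>x\<in>P. \<forall>y\<in>P. \<forall>z\<in>P. le x y \<and> le y z \<longrightarrow> le x z)"

definition covers :: "'a set \<Rightarrow> ('a \<Rightarrow> 'a \<Rightarrow> bool) \<Rightarrow> 'a \<Rightarrow> 'a \<Rightarrow> bool" where
  "covers P le x y \<longleftrightarrow> x \<in> P \<and> y \<in> P \<and> le x y \<and> x \<noteq> y \<and>
     \<not> (\<exists>z\<in>P. le x z \<and> x \<noteq> z \<and> le z y \<and> z \<noteq> y)"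

definition saturated_chain :: "'a set \<Rightarrow> ('a \<Rightarrow> 'a \<Rightarrow> bool) \<Rightarrow> 'a list \<Rightarrow> bool" where
  "saturated_chain P le xs \<longleftrightarrow> xs \<noteq> [] \<and> set xs \<subseteq> P \<and>
     (\<forall>i. Suc i < length xs \<longrightarrow> covers P le (xs ! i) (xs ! Suc i))"

definition is_minimum :: "'a set \<Rightarrow> ('a \<Rightarrow> 'a \<Rightarrow> bool) \<Rightarrow> 'a \<Rightarrow> bool" where
  "is_minimum P le m \<longleftrightarrow> m \<in> P \<and> (\<forall>x\<in>P. le m x)"

definition ranked :: "'a set \<Rightarrow> ('a \<Rightarrow> 'a \<Rightarrow> bool) \<Rightarrow> bool" where
  "ranked P le \<longleftrightarrow> (\<exists>m. is_minimum P le m \<and>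
     (\<forall>x\<in>P. \<forall>xs ys.
        saturated_chain P le xs \<and> hd xs = m \<and> last xs = x \<and>
        saturated_chain P le ys \<and> hd ys = m \<and> last ys = x \<longrightarrow> length xs = length ys))"

(* rank r(x): length (number of covering steps) of a saturated chain from the minimum to x *)
definition rank_of :: "'a set \<Rightarrow> ('a \<Rightarrow> 'a \<Rightarrow> bool) \<Rightarrow> 'a \<Rightarrow> nat" where
  "rank_of P le x = (THE k. \<exists>xs. saturated_chain P le xs \<and>
       hd xs = (THE m. is_minimum P le m) \<and> last xs = x \<and> length xs = Suc k)"

definition poset_rank :: "'a set \<Rightarrow> ('a \<Rightarrow> 'a \<Rightarrow> bool) \<Rightarrow> nat" where
  "poset_rank P le = Max (rank_of P le ` P)"

definition symmetric_chain :: "'a set \<Rightarrow> ('a \<Rightarrow> 'a \<Rightarrow> bool) \<Rightarrow> 'a list \<Rightarrow> bool" where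
  "symmetric_chain P le xs \<longleftrightarrow> saturated_chain P le xs \<and>
     rank_of P le (hd xs) + rank_of P le (last xs) = poset_rank P le"

definition SCO :: "'a set \<Rightarrow> ('a \<Rightarrow> 'a \<Rightarrow> bool) \<Rightarrow> bool" where
  "SCO P le \<longleftrightarrow> finite P \<and> poset_on P le \<and> ranked P le \<and>
     (\<exists>C. (\<forall>c\<in>C. symmetric_chain P le c) \<and> (\<forall>x\<in>P. \<exists>!c. c \<in> C \<and> x \<in> set c))"

definition orbit_set :: "(nat \<Rightarrow> nat) set \<Rightarrow> nat set \<Rightarrow> nat set set" where
  "orbit_set G A = (\<lambda>\<sigma>. \<sigma> ` A) ` G"

definition Bn_quot :: "nat \<Rightarrow> (nat \<Rightarrow> nat) set \<Rightarrow> nat set set set" where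
  "Bn_quot n G = {orbit_set G A | A. A \<subseteq> {1..n}}"

definition Bn_quot_le :: "nat set set \<Rightarrow> nat set set \<Rightarrow> bool" where
  "Bn_quot_le X Y \<longleftrightarrow> (\<exists>A\<in>X. \<exists>B\<in>Y. A \<subseteq> B)"

end

theory Submission
  imports Defs
begin

text \<open>
  Let \<open>\<rho>\<close> be an involution of \<open>{1..n}\<close>, i.e. a product of disjoint transpositions
  \<open>(a\<^sub>1 b\<^sub>1) \<dots> (a\<^sub>k b\<^sub>k)\<close> with \<open>a\<^sub>i < b\<^sub>i\<close>, fixing the remaining points \<open>F\<close>.

  Symmetric chain decompositions are handled one level below the quotient: a family of
  graded chains in \<open>Pow {1..n}\<close> such that every orbit \<open>{A, \<rho> A}\<close> is met by exactly one
  chain (\<open>scd_mod\<close>).  Such a family maps to a symmetric chain partition of \<open>B\<^sub>n/G\<close>.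
  It is built in two stages.
  \<^item> The moved points: \<open>A \<mapsto> (A \<inter> {a\<^sub>i}, \<rho>(A \<inter> {b\<^sub>i}))\<close> identifies the Boolean lattice on
    the moved points, modulo \<open>\<rho>\<close>, with the symmetric square of \<open>B\<^sub>k\<close>, i.e. \<open>B\<^sub>k \<times> B\<^sub>k\<close>
    modulo swapping the factors.  Starting from a symmetric chain decomposition of \<open>B\<^sub>k\<close>,
    the product of two distinct chains is decomposed by the usual grid (L-shaped) chains,
    and the product of a chain with itself modulo the swap by triangle chains.
  \<^item> The fixed points are added one at a time by the classical extension of chains that
    proves \<open>B\<^sub>n\<close> to be a symmetric chain order (the case \<open>\<rho> = id\<close> also yields \<open>B\<^sub>k\<close>).
\<close>

definition graded_chain :: "('a \<Rightarrow> 'a \<Rightarrow> bool) \<Rightarrow> ('a \<Rightarrow> nat) \<Rightarrow> 'a list \<Rightarrow> bool" where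
  "graded_chain st r c \<longleftrightarrow>
     (\<forall>i. Suc i < length c \<longrightarrow> st (c!i) (c!Suc i) \<and> r (c!Suc i) = Suc (r (c!i)))"

definition symm_chain :: "'a set \<Rightarrow> ('a \<Rightarrow> 'a \<Rightarrow> bool) \<Rightarrow> ('a \<Rightarrow> nat) \<Rightarrow> nat \<Rightarrow> 'a list \<Rightarrow> bool" where
  "symm_chain S st r N c \<longleftrightarrow> c \<noteq> [] \<and> set c \<subseteq> S \<and> graded_chain st r c \<and> r (hd c) + r (last c) = N"

text \<open>For \<open>f = id\<close> this is an ordinary decomposition; for an orbit map it decomposes a quotient.\<close>

definition scd_mod ::
  "'a set \<Rightarrow> ('a \<Rightarrow> 'b) \<Rightarrow> ('a \<Rightarrow> 'a \<Rightarrow> bool) \<Rightarrow> ('a \<Rightarrow> nat) \<Rightarrow> nat \<Rightarrow> 'a list set \<Rightarrow> bool" where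
  "scd_mod S f st r N C \<longleftrightarrow>
     (\<forall>c\<in>C. symm_chain S st r N c) \<and> (\<forall>x\<in>S. \<exists>!c. c \<in> C \<and> (\<exists>y\<in>set c. f y = f x))"

lemma graded_chain_rank:
  assumes "graded_chain st r c" "i < length c"
  shows "r (c!i) = r (c!0) + i"
  using assms(2)
proof (induction i)
  case (Suc i)
  thus ?case using assms(1) unfolding graded_chain_def by auto
qed simp

lemma graded_chain_last:
  assumes "graded_chain st r c" "c \<noteq> []"
  shows "r (last c) = r (hd c) + (length c - 1)"
  using graded_chain_rank[OF assms(1), of "length c - 1"] assms(2)
  by (simp add: last_conv_nth hd_conv_nth)

lemma graded_chain_inj:
  assumes "graded_chain st r c" "u \<in> set c" "v \<in> set c" "r u = r v"
  shows "u = v"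
proof -
  obtain i j where "i < length c" "j < length c" "u = c!i" "v = c!j"
    using assms(2,3) by (metis in_set_conv_nth)
  thus ?thesis using graded_chain_rank[OF assms(1), of i] graded_chain_rank[OF assms(1), of j] assms(4)
    by simp
qed

lemma graded_chain_nth_inj:
  assumes "graded_chain st r c" "i < length c" "j < length c" "c!i = c!j"
  shows "i = j"
  using graded_chain_rank[OF assms(1,2)] graded_chain_rank[OF assms(1,3)] assms(4)
  by (metis add_left_cancel)

lemma graded_chain_butlast_less:
  assumes "graded_chain st r c" "z \<in> set (butlast c)"
  shows "r z < r (last c)"
proof -
  have ne: "c \<noteq> []" using assms(2) by auto
  obtain i where i: "i < length (butlast c)" "z = butlast c ! i"
    using assms(2) by (metis in_set_conv_nth)
  have "z = c ! i" using i by (simp add: nth_butlast)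
  moreover have "last c = c ! (length c - 1)" using ne by (simp add: last_conv_nth)
  ultimately show ?thesis
    using graded_chain_rank[OF assms(1), of i] graded_chain_rank[OF assms(1), of "length c - 1"] i ne
    by simp
qed

lemma graded_chain_snoc:
  assumes "graded_chain st r c" "c \<noteq> []" "st (last c) z" "r z = Suc (r (last c))"
  shows "graded_chain st r (c @ [z])"
  unfolding graded_chain_def
proof (intro allI impI)
  fix i assume i: "Suc i < length (c @ [z])"
  show "st ((c @ [z]) ! i) ((c @ [z]) ! Suc i) \<and> r ((c @ [z]) ! Suc i) = Suc (r ((c @ [z]) ! i))"
  proof (cases "Suc i < length c")
    case True
    thus ?thesis using assms(1) unfolding graded_chain_def by (simp add: nth_append)
  next
    case False
    hence "Suc i = length c" using i by simp
    hence "i = length c - 1" by simp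
    hence "(c @ [z]) ! i = last c" "(c @ [z]) ! Suc i = z"
      using assms(2) \<open>Suc i = length c\<close> by (auto simp: nth_append last_conv_nth)
    thus ?thesis using assms(3,4) by simp
  qed
qed

lemma graded_chain_butlast: "graded_chain st r c \<Longrightarrow> graded_chain st r (butlast c)"
  unfolding graded_chain_def by (simp add: nth_butlast)

lemma graded_chain_map:
  assumes "graded_chain st r c"
    and "\<And>u v. u \<in> set c \<Longrightarrow> v \<in> set c \<Longrightarrow> st u v \<Longrightarrow> st' (g u) (g v)"
    and "\<And>u. u \<in> set c \<Longrightarrow> r' (g u) = r u + d"
  shows "graded_chain st' r' (map g c)"
  unfolding graded_chain_def
proof (intro allI impI)
  fix i assume i: "Suc i < length (map g c)"
  hence m: "c ! i \<in> set c" "c ! Suc i \<in> set c" by auto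
  have "st (c!i) (c!Suc i) \<and> r (c!Suc i) = Suc (r (c!i))"
    using assms(1) i unfolding graded_chain_def by simp
  thus "st' (map g c ! i) (map g c ! Suc i) \<and> r' (map g c ! Suc i) = Suc (r' (map g c ! i))"
    using assms(2)[OF m] assms(3)[OF m(1)] assms(3)[OF m(2)] i by simp
qed

lemma scd_mod_chain:
  assumes "scd_mod S f st r N C" "c \<in> C"
  shows "c \<noteq> []" "set c \<subseteq> S" "graded_chain st r c" "r (hd c) + r (last c) = N"
  using assms unfolding scd_mod_def symm_chain_def by auto

lemma scd_mod_unique:
  assumes "scd_mod S f st r N C" "x \<in> S"
  shows "\<exists>!c. c \<in> C \<and> (\<exists>y\<in>set c. f y = f x)"
  using assms unfolding scd_mod_def by blast

lemma scd_mod_intro: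
  assumes "\<And>c. c \<in> C \<Longrightarrow> symm_chain S st r N c"
    and "\<And>x. x \<in> S \<Longrightarrow> \<exists>!c. c \<in> C \<and> (\<exists>y\<in>set c. f y = f x)"
  shows "scd_mod S f st r N C"
  using assms unfolding scd_mod_def by blast

lemma scd_mod_center:
  assumes "scd_mod S f st r N C" "c \<in> C"
  shows "2 * r (c!0) + (length c - 1) = N"
  using scd_mod_chain[OF assms] graded_chain_last[of st r c] by (simp add: hd_conv_nth)

lemma scd_mod_transfer:
  assumes scd: "scd_mod S f st r N C" and img: "g ` S = S'"
    and mono: "\<And>x y. x \<in> S \<Longrightarrow> y \<in> S \<Longrightarrow> st x y \<Longrightarrow> st' (g x) (g y)"
    and rank: "\<And>x. x \<in> S \<Longrightarrow> r' (g x) = r x"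
    and classes: "\<And>x y. x \<in> S \<Longrightarrow> y \<in> S \<Longrightarrow> f' (g x) = f' (g y) \<longleftrightarrow> f x = f y"
  shows "scd_mod S' f' st' r' N (map g ` C)"
proof (rule scd_mod_intro)
  fix c' assume "c' \<in> map g ` C"
  then obtain c where c: "c \<in> C" "c' = map g c" by auto
  note cc = scd_mod_chain[OF scd c(1)]
  have "graded_chain st' r' c'"
    unfolding c(2)
  proof (rule graded_chain_map[OF cc(3), where d = 0])
    show "\<And>u v. u \<in> set c \<Longrightarrow> v \<in> set c \<Longrightarrow> st u v \<Longrightarrow> st' (g u) (g v)"
      using cc(2) mono by blast
  qed (use cc(2) rank in auto)
  moreover have "set c' \<subseteq> S'" using cc(2) c(2) img by auto
  moreover have "r' (hd c') + r' (last c') = N"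
  proof -
    have "hd c \<in> S" "last c \<in> S" using cc(1,2) by auto
    thus ?thesis using cc(1,4) c(2) rank by (simp add: hd_map last_map)
  qed
  ultimately show "symm_chain S' st' r' N c'"
    unfolding symm_chain_def using cc(1) c(2) by simp
next
  fix x' assume "x' \<in> S'"
  hence "x' \<in> g ` S" using img by simp
  then obtain x where x: "x \<in> S" "x' = g x" by blast
  obtain c where c: "c \<in> C" "\<exists>y\<in>set c. f y = f x"
    and u: "\<And>d. d \<in> C \<Longrightarrow> (\<exists>y\<in>set d. f y = f x) \<Longrightarrow> d = c"
    using scd_mod_unique[OF scd x(1)] by blast
  have sub: "\<And>d. d \<in> C \<Longrightarrow> set d \<subseteq> S" using scd_mod_chain(2)[OF scd] by blast
  show "\<exists>!c'. c' \<in> map g ` C \<and> (\<exists>y\<in>set c'. f' y = f' x')"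
  proof (rule ex1I[of _ "map g c"])
    obtain y where y: "y \<in> set c" "f y = f x" using c by auto
    have "f' (g y) = f' (g x)" using classes[of y x] y sub[OF c(1)] x(1) by blast
    thus "map g c \<in> map g ` C \<and> (\<exists>y\<in>set (map g c). f' y = f' x')"
      using c(1) y(1) x(2) by auto
  next
    fix d' assume "d' \<in> map g ` C \<and> (\<exists>y\<in>set d'. f' y = f' x')"
    then obtain d y where d: "d \<in> C" "d' = map g d" "y \<in> set d" "f' (g y) = f' (g x)"
      using x by auto
    have "f y = f x" using classes[of y x] d(3,4) sub[OF d(1)] x(1) by blast
    thus "d' = map g c" using u[OF d(1)] d by auto
  qed
qed

text \<open>The \<open>k\<close>-th chain of the standard decomposition of the product of a chain of
  length \<open>p\<close> and a chain of length \<open>q\<close>: a monotone lattice path through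
  \<open>[0,p) \<times> [0,q)\<close>, first along the second coordinate, then along the first.\<close>

definition grid_path :: "nat \<Rightarrow> nat \<Rightarrow> nat \<Rightarrow> nat \<times> nat" where
  "grid_path q k m = (if m < q - k then (k, m) else (m - (q - k) + k + 1, q - 1 - k))"

definition grid_len :: "nat \<Rightarrow> nat \<Rightarrow> nat \<Rightarrow> nat" where
  "grid_len p q k = (q - k) + (p - 1 - k)"

text \<open>The analogous decomposition of the triangle \<open>{(a,b). a \<le> b < p}\<close>, which indexes
  the unordered pairs of entries of a single chain of length \<open>p\<close>.\<close>

definition tri_path :: "nat \<Rightarrow> nat \<Rightarrow> nat \<Rightarrow> nat \<times> nat" where
  "tri_path p k m = (if m < p - 2*k then (k, k + m) else (m - (p - 2*k) + k + 1, p - 1 - k))"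

definition tri_len :: "nat \<Rightarrow> nat \<Rightarrow> nat" where
  "tri_len p k = (p - 2*k) + (p - 1 - 2*k)"

lemma grid_path_props:
  assumes "m < grid_len p q k" "k < min p q"
  shows "fst (grid_path q k m) + snd (grid_path q k m) = k + m"
    and "fst (grid_path q k m) < p" "snd (grid_path q k m) < q"
    and "grid_path q k m = (a, b) \<Longrightarrow> k = min a (q - 1 - b)"
  using assms by (auto simp: grid_path_def grid_len_def split: if_splits)

lemma grid_path_step:
  assumes "Suc m < grid_len p q k" "k < min p q"
  shows "(fst (grid_path q k (Suc m)) = Suc (fst (grid_path q k m)) \<and> snd (grid_path q k (Suc m)) = snd (grid_path q k m)) \<or>
         (fst (grid_path q k (Suc m)) = fst (grid_path q k m) \<and> snd (grid_path q k (Suc m)) = Suc (snd (grid_path q k m)))"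
  using assms by (auto simp: grid_path_def grid_len_def)

lemma grid_path_cover:
  assumes "a < p" "b < q"
  shows "\<exists>m < grid_len p q (min a (q - 1 - b)). grid_path q (min a (q - 1 - b)) m = (a, b)"
proof (cases "a \<le> q - 1 - b")
  case True
  then show ?thesis using assms
    by (intro exI[of _ b]) (auto simp: grid_path_def grid_len_def min_def)
next
  case False
  then show ?thesis using assms
    by (intro exI[of _ "a - (q - 1 - b) - 1 + (b + 1)"]) (auto simp: grid_path_def grid_len_def min_def)
qed

lemma tri_path_props:
  assumes "m < tri_len p k" "2*k < p"
  shows "fst (tri_path p k m) + snd (tri_path p k m) = 2*k + m"
    and "fst (tri_path p k m) \<le> snd (tri_path p k m)" "snd (tri_path p k m) < p" "fst (tri_path p k m) < p"
    and "tri_path p k m = (a, b) \<Longrightarrow> k = min a (p - 1 - b)"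
  using assms by (auto simp: tri_path_def tri_len_def split: if_splits)

lemma tri_path_step:
  assumes "Suc m < tri_len p k" "2*k < p"
  shows "(fst (tri_path p k (Suc m)) = Suc (fst (tri_path p k m)) \<and> snd (tri_path p k (Suc m)) = snd (tri_path p k m)) \<or>
         (fst (tri_path p k (Suc m)) = fst (tri_path p k m) \<and> snd (tri_path p k (Suc m)) = Suc (snd (tri_path p k m)))"
  using assms by (auto simp: tri_path_def tri_len_def)

lemma tri_path_cover:
  assumes "a \<le> b" "b < p"
  shows "2 * min a (p - 1 - b) < p"
    and "\<exists>m < tri_len p (min a (p - 1 - b)). tri_path p (min a (p - 1 - b)) m = (a, b)"
proof -
  show "2 * min a (p - 1 - b) < p" using assms by (auto simp: min_def)
  show "\<exists>m < tri_len p (min a (p - 1 - b)). tri_path p (min a (p - 1 - b)) m = (a, b)"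
  proof (cases "a \<le> p - 1 - b")
    case True
    then show ?thesis using assms
      by (intro exI[of _ "b - a"]) (auto simp: tri_path_def tri_len_def min_def)
  next
    case False
    then show ?thesis using assms
      by (intro exI[of _ "a - (p - 1 - b) - 1 + (p - 2 * (p - 1 - b))"])
         (auto simp: tri_path_def tri_len_def min_def)
  qed
qed

abbreviation prod_step :: "('a \<Rightarrow> 'a \<Rightarrow> bool) \<Rightarrow> 'a \<times> 'a \<Rightarrow> 'a \<times> 'a \<Rightarrow> bool" where
  "prod_step st \<equiv> (\<lambda>(a, b) (c, d). (st a c \<and> b = d) \<or> (a = c \<and> st b d))"

abbreviation prod_rank :: "('a \<Rightarrow> nat) \<Rightarrow> 'a \<times> 'a \<Rightarrow> nat" where
  "prod_rank r \<equiv> (\<lambda>(x, y). r x + r y)"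

lemma lattice_path_graded:
  fixes c1 c2 :: "'a list" and pt :: "nat \<Rightarrow> nat \<times> nat"
  assumes ch1: "graded_chain st r c1" and ch2: "graded_chain st r c2"
    and range: "\<And>m. m < L \<Longrightarrow> fst (pt m) < length c1 \<and> snd (pt m) < length c2"
    and level: "\<And>m. m < L \<Longrightarrow> fst (pt m) + snd (pt m) = k + m"
    and step: "\<And>m. Suc m < L \<Longrightarrow>
      (fst (pt (Suc m)) = Suc (fst (pt m)) \<and> snd (pt (Suc m)) = snd (pt m)) \<or>
      (fst (pt (Suc m)) = fst (pt m) \<and> snd (pt (Suc m)) = Suc (snd (pt m)))"
  defines "g \<equiv> map (\<lambda>m. (c1 ! fst (pt m), c2 ! snd (pt m))) [0..<L]"
  shows "\<And>m. m < L \<Longrightarrow> prod_rank r (g ! m) = r (c1!0) + r (c2!0) + k + m"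
    and "graded_chain (prod_step st) (prod_rank r) g"
proof -
  show rk: "prod_rank r (g ! m) = r (c1!0) + r (c2!0) + k + m" if "m < L" for m
  proof -
    have "r (c1 ! fst (pt m)) = r (c1!0) + fst (pt m)" using graded_chain_rank[OF ch1] range[OF that] by blast
    moreover have "r (c2 ! snd (pt m)) = r (c2!0) + snd (pt m)" using graded_chain_rank[OF ch2] range[OF that] by blast
    ultimately show ?thesis using level[OF that] that unfolding g_def by simp
  qed
  show "graded_chain (prod_step st) (prod_rank r) g"
    unfolding graded_chain_def
  proof (intro allI impI conjI)
    fix m assume m: "Suc m < length g"
    hence mL: "Suc m < L" by (simp add: g_def)
    show "prod_rank r (g ! Suc m) = Suc (prod_rank r (g ! m))"
      using rk[of m] rk[of "Suc m"] mL by simp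
    have r1: "fst (pt (Suc m)) < length c1 \<and> snd (pt (Suc m)) < length c2" using range mL by blast
    show "prod_step st (g ! m) (g ! Suc m)"
      using step[OF mL]
    proof
      assume h: "fst (pt (Suc m)) = Suc (fst (pt m)) \<and> snd (pt (Suc m)) = snd (pt m)"
      hence "st (c1 ! fst (pt m)) (c1 ! Suc (fst (pt m)))" using ch1 r1 unfolding graded_chain_def by auto
      thus ?thesis using h mL unfolding g_def by simp
    next
      assume h: "fst (pt (Suc m)) = fst (pt m) \<and> snd (pt (Suc m)) = Suc (snd (pt m))"
      hence "st (c2 ! snd (pt m)) (c2 ! Suc (snd (pt m)))" using ch2 r1 unfolding graded_chain_def by auto
      thus ?thesis using h mL unfolding g_def by simp
    qed
  qed
qed

lemma lattice_path_chain:
  fixes c1 c2 :: "'a list" and pt :: "nat \<Rightarrow> nat \<times> nat"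
  assumes scd: "scd_mod S f st r N C" and c1: "c1 \<in> C" and c2: "c2 \<in> C"
    and L: "L \<ge> 1"
    and range: "\<And>m. m < L \<Longrightarrow> fst (pt m) < length c1 \<and> snd (pt m) < length c2"
    and level: "\<And>m. m < L \<Longrightarrow> fst (pt m) + snd (pt m) = k + m"
    and step: "\<And>m. Suc m < L \<Longrightarrow>
      (fst (pt (Suc m)) = Suc (fst (pt m)) \<and> snd (pt (Suc m)) = snd (pt m)) \<or>
      (fst (pt (Suc m)) = fst (pt m) \<and> snd (pt (Suc m)) = Suc (snd (pt m)))"
    and balanced: "2 * k + (L - 1) = (length c1 - 1) + (length c2 - 1)"
  defines "g \<equiv> map (\<lambda>m. (c1 ! fst (pt m), c2 ! snd (pt m))) [0..<L]"
  shows "symm_chain (S \<times> S) (prod_step st) (prod_rank r) (2 * N) g"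
proof -
  have ch: "graded_chain st r c1" "graded_chain st r c2" using scd_mod_chain(3)[OF scd] c1 c2 by auto
  have rk: "prod_rank r (g ! m) = r (c1!0) + r (c2!0) + k + m" if "m < L" for m
    using lattice_path_graded(1)[OF ch range level step that] unfolding g_def .
  have graded: "graded_chain (prod_step st) (prod_rank r) g"
    using lattice_path_graded(2)[OF ch range level step] unfolding g_def .
  have "g \<noteq> []" using L unfolding g_def by simp
  moreover have "set g \<subseteq> S \<times> S"
    unfolding g_def using range scd_mod_chain(2)[OF scd c1] scd_mod_chain(2)[OF scd c2]
    by (fastforce dest: nth_mem)
  moreover have "prod_rank r (hd g) + prod_rank r (last g) = 2 * N"
  proof -
    have "hd g = g ! 0" "last g = g ! (L - 1)"
      using L \<open>g \<noteq> []\<close> by (auto simp: g_def hd_conv_nth last_conv_nth)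
    moreover have "prod_rank r (g ! 0) = r (c1!0) + r (c2!0) + k + 0"
      "prod_rank r (g ! (L - 1)) = r (c1!0) + r (c2!0) + k + (L - 1)"
      using rk L by simp_all
    ultimately have "prod_rank r (hd g) + prod_rank r (last g) = 2 * (r (c1!0) + r (c2!0) + k) + (L - 1)"
      by simp
    also have "\<dots> = (2 * r (c1!0) + (length c1 - 1)) + (2 * r (c2!0) + (length c2 - 1))"
      using balanced by simp
    also have "\<dots> = 2 * N" using scd_mod_center[OF scd c1] scd_mod_center[OF scd c2] by simp
    finally show ?thesis .
  qed
  ultimately show ?thesis using graded unfolding symm_chain_def by blast
qed

definition grid_chain :: "'a list \<Rightarrow> 'a list \<Rightarrow> nat \<Rightarrow> ('a \<times> 'a) list" where
  "grid_chain c1 c2 k = map (\<lambda>m. (c1 ! fst (grid_path (length c2) k m), c2 ! snd (grid_path (length c2) k m)))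
      [0..<grid_len (length c1) (length c2) k]"

definition tri_chain :: "'a list \<Rightarrow> nat \<Rightarrow> ('a \<times> 'a) list" where
  "tri_chain c k = map (\<lambda>m. (c ! fst (tri_path (length c) k m), c ! snd (tri_path (length c) k m)))
      [0..<tri_len (length c) k]"

lemma grid_chain_is_chain:
  assumes "scd_mod S f st r N C" "c1 \<in> C" "c2 \<in> C" "k < min (length c1) (length c2)"
  shows "symm_chain (S \<times> S) (prod_step st) (prod_rank r) (2 * N) (grid_chain c1 c2 k)"
  unfolding grid_chain_def
  by (rule lattice_path_chain[OF assms(1-3), where k = k])
     (use assms(4) grid_path_props grid_path_step in \<open>auto simp: grid_len_def\<close>)

lemma tri_chain_is_chain:
  assumes "scd_mod S f st r N C" "c \<in> C" "2 * k < length c"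
  shows "symm_chain (S \<times> S) (prod_step st) (prod_rank r) (2 * N) (tri_chain c k)"
  unfolding tri_chain_def
  by (rule lattice_path_chain[OF assms(1,2,2), where k = "2 * k"])
     (use assms(3) tri_path_props tri_path_step in \<open>auto simp: tri_len_def\<close>)

lemma grid_chain_elem:
  assumes "y \<in> set (grid_chain c1 c2 k)" "k < min (length c1) (length c2)"
  obtains i j where "y = (c1 ! i, c2 ! j)" "i < length c1" "j < length c2" "k = min i (length c2 - 1 - j)"
proof -
  obtain m where m: "m < grid_len (length c1) (length c2) k"
    "y = (c1 ! fst (grid_path (length c2) k m), c2 ! snd (grid_path (length c2) k m))"
    using assms(1) unfolding grid_chain_def by auto
  obtain i j where ij: "grid_path (length c2) k m = (i, j)" by fastforce
  show ?thesis using that[of i j] grid_path_props[OF m(1) assms(2)] m(2) ij by simp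
qed

lemma tri_chain_elem:
  assumes "y \<in> set (tri_chain c k)" "2 * k < length c"
  obtains i j where "y = (c ! i, c ! j)" "i \<le> j" "j < length c" "k = min i (length c - 1 - j)"
proof -
  obtain m where m: "m < tri_len (length c) k"
    "y = (c ! fst (tri_path (length c) k m), c ! snd (tri_path (length c) k m))"
    using assms(1) unfolding tri_chain_def by auto
  obtain i j where ij: "tri_path (length c) k m = (i, j)" by fastforce
  show ?thesis using that[of i j] tri_path_props[OF m(1) assms(2)] m(2) ij by simp
qed

lemma grid_chain_cover:
  assumes "i < length c1" "j < length c2"
  shows "(c1 ! i, c2 ! j) \<in> set (grid_chain c1 c2 (min i (length c2 - 1 - j)))"
  using grid_path_cover[OF assms] unfolding grid_chain_def by force

lemma tri_chain_cover:
  assumes "i \<le> j" "j < length c"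
  shows "2 * min i (length c - 1 - j) < length c"
    and "(c ! i, c ! j) \<in> set (tri_chain c (min i (length c - 1 - j)))"
  using tri_path_cover[OF assms] unfolding tri_chain_def by force+

definition upair :: "'a \<times> 'a \<Rightarrow> 'a set" where
  "upair p = {fst p, snd p}"

lemma upair_conv [simp]: "upair (a, b) = {a, b}"
  by (simp add: upair_def)

text \<open>From a decomposition \<open>C\<close> of \<open>S\<close> (with an injective
  numbering \<open>h\<close> of its chains) we decompose \<open>S \<times> S\<close> modulo swapping coordinates:
  grid chains for two distinct chains (ordered by \<open>h\<close>), triangle chains for a chain
  paired with itself.\<close>

locale scd_square =
  fixes S :: "'a set" and st :: "'a \<Rightarrow> 'a \<Rightarrow> bool" and r :: "'a \<Rightarrow> nat" and N :: nat
    and C :: "'a list set" and h :: "'a list \<Rightarrow> nat"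
  assumes scd: "scd_mod S id st r N C" and h_inj: "inj_on h C"
begin

definition chain_of :: "'a \<Rightarrow> 'a list" where
  "chain_of z = (THE c. c \<in> C \<and> z \<in> set c)"

definition pos_of :: "'a \<Rightarrow> nat" where
  "pos_of z = (THE i. i < length (chain_of z) \<and> chain_of z ! i = z)"

lemma coordinates:
  assumes "c \<in> C" "i < length c"
  shows "chain_of (c ! i) = c" "pos_of (c ! i) = i"
proof -
  have "c ! i \<in> S" using scd_mod_chain(2)[OF scd assms(1)] assms(2) by auto
  hence "\<exists>!d. d \<in> C \<and> c ! i \<in> set d" using scd_mod_unique[OF scd] by simp
  thus c: "chain_of (c ! i) = c" unfolding chain_of_def using assms by (auto intro: the1_equality)
  have "graded_chain st r c" using scd_mod_chain(3)[OF scd assms(1)] .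
  thus "pos_of (c ! i) = i" unfolding pos_of_def c using assms(2)
    by (auto intro!: the_equality dest: graded_chain_nth_inj)
qed

lemma coordinates_exist:
  assumes "z \<in> S"
  obtains c i where "c \<in> C" "i < length c" "z = c ! i"
proof -
  obtain c where "c \<in> C" "z \<in> set c" using scd_mod_unique[OF scd assms] by auto
  thus ?thesis using that by (metis in_set_conv_nth)
qed

definition pair_chain :: "'a list \<Rightarrow> nat \<Rightarrow> 'a list \<Rightarrow> nat \<Rightarrow> ('a \<times> 'a) list" where
  "pair_chain c1 a c2 b =
     (if c1 = c2 then tri_chain c1 (min (min a b) (length c1 - 1 - max a b))
      else if h c1 < h c2 then grid_chain c1 c2 (min a (length c2 - 1 - b))
      else grid_chain c2 c1 (min b (length c1 - 1 - a)))"

definition sq_chain :: "'a \<Rightarrow> 'a \<Rightarrow> ('a \<times> 'a) list" where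
  "sq_chain u v = pair_chain (chain_of u) (pos_of u) (chain_of v) (pos_of v)"

definition sq_family :: "('a \<times> 'a) list set" where
  "sq_family = {grid_chain c1 c2 k | c1 c2 k. c1 \<in> C \<and> c2 \<in> C \<and> h c1 < h c2 \<and> k < min (length c1) (length c2)}
     \<union> {tri_chain c k | c k. c \<in> C \<and> 2 * k < length c}"

lemma pair_chain_sym:
  assumes "c1 \<in> C" "c2 \<in> C"
  shows "pair_chain c1 a c2 b = pair_chain c2 b c1 a"
proof -
  have "c1 \<noteq> c2 \<Longrightarrow> h c1 \<noteq> h c2" using h_inj assms by (meson inj_on_eq_iff)
  thus ?thesis unfolding pair_chain_def by (auto simp: min.commute max.commute)
qed

lemma sq_chain_sym: "u \<in> S \<Longrightarrow> v \<in> S \<Longrightarrow> sq_chain u v = sq_chain v u"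
  unfolding sq_chain_def by (metis coordinates coordinates_exist pair_chain_sym)

lemma sq_chain_covers:
  assumes "u \<in> S" "v \<in> S"
  shows "sq_chain u v \<in> sq_family \<and> (\<exists>y\<in>set (sq_chain u v). upair y = {u, v})"
proof -
  obtain c1 a where u: "c1 \<in> C" "a < length c1" "u = c1 ! a" using coordinates_exist[OF assms(1)] .
  obtain c2 b where v: "c2 \<in> C" "b < length c2" "v = c2 ! b" using coordinates_exist[OF assms(2)] .
  have sq: "sq_chain u v = pair_chain c1 a c2 b"
    unfolding sq_chain_def u v coordinates[OF u(1,2)] coordinates[OF v(1,2)] ..
  show ?thesis
  proof (cases "c1 = c2")
    case True
    define k where "k = min (min a b) (length c1 - 1 - max a b)"
    have "min a b \<le> max a b" "max a b < length c1" using u v True by auto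
    note cov = tri_chain_cover[OF this, folded k_def]
    have eq: "sq_chain u v = tri_chain c1 k" unfolding sq pair_chain_def k_def using True by simp
    have "tri_chain c1 k \<in> sq_family" unfolding sq_family_def using cov(1) u(1) by blast
    moreover have "upair (c1 ! min a b, c1 ! max a b) = {u, v}" using u v True by (auto simp: min_def max_def)
    ultimately show ?thesis unfolding eq using cov(2) by blast
  next
    case False
    hence "h c1 \<noteq> h c2" using h_inj u v by (meson inj_on_eq_iff)
    then consider "h c1 < h c2" | "h c2 < h c1" by linarith
    thus ?thesis
    proof cases
      case 1
      define k where "k = min a (length c2 - 1 - b)"
      have eq: "sq_chain u v = grid_chain c1 c2 k" unfolding sq pair_chain_def k_def using False 1 by simp
      have "k < min (length c1) (length c2)" unfolding k_def using u v by auto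
      hence "grid_chain c1 c2 k \<in> sq_family" unfolding sq_family_def using u(1) v(1) 1 by blast
      moreover have "(c1 ! a, c2 ! b) \<in> set (grid_chain c1 c2 k)"
        unfolding k_def using grid_chain_cover[OF u(2) v(2)] .
      ultimately show ?thesis unfolding eq using u(3) v(3) by force
    next
      case 2
      define k where "k = min b (length c1 - 1 - a)"
      have eq: "sq_chain u v = grid_chain c2 c1 k" unfolding sq pair_chain_def k_def using False 2 by simp
      have "k < min (length c2) (length c1)" unfolding k_def using u v by auto
      hence "grid_chain c2 c1 k \<in> sq_family" unfolding sq_family_def using u(1) v(1) 2 by blast
      moreover have "(c2 ! b, c1 ! a) \<in> set (grid_chain c2 c1 k)"
        unfolding k_def using grid_chain_cover[OF v(2) u(2)] .
      ultimately show ?thesis unfolding eq using u(3) v(3) by force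
    qed
  qed
qed

lemma sq_chain_unique:
  assumes "g \<in> sq_family" "(u, v) \<in> set g"
  shows "g = sq_chain u v"
  using assms(1) unfolding sq_family_def
proof (elim UnE CollectE exE conjE)
  fix c1 c2 k assume g: "g = grid_chain c1 c2 k" and c: "c1 \<in> C" "c2 \<in> C" "h c1 < h c2"
    and k: "k < min (length c1) (length c2)"
  obtain i j where ij: "(u, v) = (c1 ! i, c2 ! j)" "i < length c1" "j < length c2"
      "k = min i (length c2 - 1 - j)"
    using grid_chain_elem[OF assms(2)[unfolded g] k] .
  show "g = sq_chain u v" using c ij coordinates g unfolding sq_chain_def pair_chain_def by auto
next
  fix c k assume g: "g = tri_chain c k" and c: "c \<in> C" and k: "2 * k < length c"
  obtain i j where ij: "(u, v) = (c ! i, c ! j)" "i \<le> j" "j < length c"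
      "k = min i (length c - 1 - j)"
    using tri_chain_elem[OF assms(2)[unfolded g] k] .
  show "g = sq_chain u v" using c ij coordinates g unfolding sq_chain_def pair_chain_def
    by (auto simp: min_def max_def)
qed

lemma sq_family_chain:
  assumes "g \<in> sq_family"
  shows "symm_chain (S \<times> S) (prod_step st) (prod_rank r) (2 * N) g"
  using assms unfolding sq_family_def
proof (elim UnE CollectE exE conjE)
  fix c1 c2 k assume "g = grid_chain c1 c2 k" "c1 \<in> C" "c2 \<in> C" "k < min (length c1) (length c2)"
  thus ?thesis using grid_chain_is_chain[OF scd, of c1 c2 k] by simp
next
  fix c k assume "g = tri_chain c k" "c \<in> C" "2 * k < length c"
  thus ?thesis using tri_chain_is_chain[OF scd, of c k] by simp
qed

theorem scd_square: "scd_mod (S \<times> S) upair (prod_step st) (prod_rank r) (2 * N) sq_family"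
proof (rule scd_mod_intro)
  show "\<And>g. g \<in> sq_family \<Longrightarrow> symm_chain (S \<times> S) (prod_step st) (prod_rank r) (2 * N) g"
    by (rule sq_family_chain)
next
  fix x assume "x \<in> S \<times> S"
  then obtain x1 x2 where x: "x = (x1, x2)" "x1 \<in> S" "x2 \<in> S" by auto
  show "\<exists>!g. g \<in> sq_family \<and> (\<exists>y\<in>set g. upair y = upair x)"
  proof (rule ex1I[of _ "sq_chain x1 x2"])
    show "sq_chain x1 x2 \<in> sq_family \<and> (\<exists>y\<in>set (sq_chain x1 x2). upair y = upair x)"
      using sq_chain_covers[OF x(2,3)] x(1) by simp
  next
    fix g assume g: "g \<in> sq_family \<and> (\<exists>y\<in>set g. upair y = upair x)"
    then obtain u v where uv: "(u, v) \<in> set g" "{u, v} = {x1, x2}" using x(1) by auto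
    have "u \<in> S" "v \<in> S" using sq_family_chain g uv(1) unfolding symm_chain_def by auto
    have "g = sq_chain u v" using sq_chain_unique g uv(1) by blast
    also have "\<dots> = sq_chain x1 x2"
      using uv(2) sq_chain_sym \<open>u \<in> S\<close> \<open>v \<in> S\<close> by (auto simp: doubleton_eq_iff)
    finally show "g = sq_chain x1 x2" .
  qed
qed

end

definition inv_orbit :: "('a \<Rightarrow> 'a) \<Rightarrow> 'a set \<Rightarrow> 'a set set" where
  "inv_orbit \<rho> A = {A, \<rho> ` A}"

lemma inv_orbit_eq:
  assumes "\<And>y. \<rho> (\<rho> y) = y"
  shows "inv_orbit \<rho> A = inv_orbit \<rho> B \<longleftrightarrow> B = A \<or> B = \<rho> ` A"
proof
  assume "inv_orbit \<rho> A = inv_orbit \<rho> B"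
  moreover have "B \<in> inv_orbit \<rho> B" unfolding inv_orbit_def by simp
  ultimately show "B = A \<or> B = \<rho> ` A" unfolding inv_orbit_def by blast
next
  assume "B = A \<or> B = \<rho> ` A"
  moreover have "\<rho> ` \<rho> ` A = A" using assms by (simp add: image_image)
  ultimately show "inv_orbit \<rho> A = inv_orbit \<rho> B" unfolding inv_orbit_def by auto
qed

text \<open>Each chain \<open>c\<close> of a decomposition of \<open>Pow T\<close> modulo orbits gives two chains: \<open>c\<close>
  extended by \<open>insert x (last c)\<close>, and \<open>insert x\<close> applied to all but the last entry
  of \<open>c\<close> (the classical construction showing that \<open>B\<^sub>n\<close> is a symmetric chain order).\<close>

locale fixed_point_ext =
  fixes \<rho> :: "'a \<Rightarrow> 'a" and T :: "'a set" and x :: 'a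
  assumes invol: "\<And>y. \<rho> (\<rho> y) = y"
    and fin: "finite T" and closed: "\<rho> ` T \<subseteq> T"
    and x_new: "x \<notin> T" and x_fixed: "\<rho> x = x"
begin

abbreviation orb :: "'a set \<Rightarrow> 'a set set" where "orb \<equiv> inv_orbit \<rho>"

lemma card_insert_x: "A \<subseteq> T \<Longrightarrow> card (insert x A) = Suc (card A)"
  using x_new fin by (meson card_insert_disjoint finite_subset subsetD)

lemma orb_sub_T:
  assumes "A \<subseteq> T" "orb A = orb B"
  shows "x \<notin> B"
proof -
  have "B = A \<or> B = \<rho> ` A" using assms(2) by (simp only: inv_orbit_eq[OF invol])
  hence "B \<subseteq> T" using assms(1) closed by auto
  thus ?thesis using x_new by blast
qed

lemma orb_insert_x:
  assumes "z \<subseteq> T" "x \<in> B"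
  shows "orb (insert x z) = orb B \<longleftrightarrow> orb z = orb (B - {x})"
proof -
  define B0 where "B0 = B - {x}"
  have B: "B = insert x B0" "x \<notin> B0" using assms(2) unfolding B0_def by auto
  have xz: "x \<notin> z" "x \<notin> \<rho> ` z" using assms(1) closed x_new by auto
  have "orb (insert x z) = orb B \<longleftrightarrow> insert x B0 = insert x z \<or> insert x B0 = insert x (\<rho> ` z)"
    unfolding inv_orbit_eq[OF invol] B(1) using x_fixed by simp
  also have "\<dots> \<longleftrightarrow> B0 = z \<or> B0 = \<rho> ` z" using B(2) xz by (metis insert_ident)
  also have "\<dots> \<longleftrightarrow> orb z = orb B0" unfolding inv_orbit_eq[OF invol] ..
  finally show ?thesis unfolding B0_def .
qed

lemma orb_insert_mem:
  assumes "orb (insert x z) = orb B"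
  shows "x \<in> B"
proof -
  have "B = insert x z \<or> B = \<rho> ` insert x z" using assms by (simp only: inv_orbit_eq[OF invol])
  thus ?thesis using x_fixed by auto
qed

definition ext_top :: "'a set list \<Rightarrow> 'a set list" where
  "ext_top c = c @ [insert x (last c)]"

definition ext_low :: "'a set list \<Rightarrow> 'a set list" where
  "ext_low c = map (insert x) (butlast c)"

definition ext_family :: "'a set list set \<Rightarrow> 'a set list set" where
  "ext_family C = ext_top ` C \<union> ext_low ` {c \<in> C. 2 \<le> length c}"

end

locale fixed_point_ext_scd = fixed_point_ext +
  fixes N :: nat and C :: "'a set list set"
  assumes scd: "scd_mod (Pow T) orb (\<subseteq>) card N C"
begin

lemma ext_top_chain:
  assumes "c \<in> C"
  shows "symm_chain (Pow (insert x T)) (\<subseteq>) card (Suc N) (ext_top c)"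
proof -
  note cc = scd_mod_chain[OF scd assms]
  have lT: "last c \<subseteq> T" using cc(1,2) last_in_set by blast
  have "graded_chain (\<subseteq>) card (ext_top c)"
    unfolding ext_top_def by (rule graded_chain_snoc) (use cc card_insert_x[OF lT] in auto)
  thus ?thesis using cc card_insert_x[OF lT] lT unfolding symm_chain_def ext_top_def by auto
qed

lemma ext_low_chain:
  assumes "c \<in> C" "2 \<le> length c"
  shows "symm_chain (Pow (insert x T)) (\<subseteq>) card (Suc N) (ext_low c)"
proof -
  note cc = scd_mod_chain[OF scd assms(1)]
  have bT: "set (butlast c) \<subseteq> Pow T" using cc(2) by (meson in_set_butlastD subset_iff)
  have bne: "butlast c \<noteq> []" using assms(2) by (cases c) auto
  have "graded_chain (\<subseteq>) card (ext_low c)"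
    unfolding ext_low_def
    by (rule graded_chain_map[OF graded_chain_butlast[OF cc(3)], where d = 1])
       (use bT card_insert_x in auto)
  moreover have "card (hd (ext_low c)) + card (last (ext_low c)) = Suc N"
  proof -
    have hb: "hd (butlast c) = hd c" using bne by (cases c) auto
    have "card (last c) = Suc (card (last (butlast c)))"
      using graded_chain_last[OF cc(3) cc(1)] graded_chain_last[OF graded_chain_butlast[OF cc(3)] bne]
        hb assms(2) by simp
    moreover note hb
    moreover have "hd (butlast c) \<subseteq> T" "last (butlast c) \<subseteq> T" using bT bne hd_in_set last_in_set by blast+
    ultimately show ?thesis using cc(4) card_insert_x bne unfolding ext_low_def by (simp add: hd_map last_map)
  qed
  ultimately show ?thesis using bT bne unfolding symm_chain_def ext_low_def by auto
qed

text \<open>A chain of the decomposition meets every orbit at most once, since the members of an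
  orbit have equal cardinality.\<close>

lemma chain_orbit_unique:
  assumes "c \<in> C" "y \<in> set c" "z \<in> set c" "orb y = orb z"
  shows "y = z"
proof -
  have "z = y \<or> z = \<rho> ` y" using assms(4) by (simp only: inv_orbit_eq[OF invol])
  moreover have "inj_on \<rho> y" by (metis inj_onI invol)
  ultimately have "card z = card y" using card_image by metis
  thus ?thesis using graded_chain_inj[OF scd_mod_chain(3)[OF scd assms(1)] assms(2,3)] by simp
qed

lemma chain_sub_T: "c \<in> C \<Longrightarrow> y \<in> set c \<Longrightarrow> y \<subseteq> T"
  using scd_mod_chain(2)[OF scd] by blast

lemma ext_meets_without_x:
  assumes "c \<in> C" "x \<notin> B"
  shows "(\<exists>y\<in>set (ext_top c). orb y = orb B) \<longleftrightarrow> (\<exists>y\<in>set c. orb y = orb B)"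
    and "\<not> (\<exists>y\<in>set (ext_low c). orb y = orb B)"
proof -
  have "orb (insert x z) \<noteq> orb B" for z using assms(2) orb_insert_mem by blast
  thus "(\<exists>y\<in>set (ext_top c). orb y = orb B) \<longleftrightarrow> (\<exists>y\<in>set c. orb y = orb B)"
    "\<not> (\<exists>y\<in>set (ext_low c). orb y = orb B)"
    unfolding ext_top_def ext_low_def by auto
qed

lemma ext_meets_with_x:
  assumes "c \<in> C" "x \<in> B"
  shows "(\<exists>y\<in>set (ext_top c). orb y = orb B) \<longleftrightarrow> orb (last c) = orb (B - {x})"
    and "(\<exists>y\<in>set (ext_low c). orb y = orb B) \<longleftrightarrow> (\<exists>y\<in>set (butlast c). orb y = orb (B - {x}))"
proof -
  have no_c: "orb y \<noteq> orb B" if "y \<in> set c" for y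
    using orb_sub_T[OF chain_sub_T[OF assms(1) that]] assms(2) by blast
  have lT: "last c \<subseteq> T" using chain_sub_T[OF assms(1)] scd_mod_chain(1)[OF scd assms(1)] by simp
  have top: "set (ext_top c) = insert (insert x (last c)) (set c)" unfolding ext_top_def by simp
  show "(\<exists>y\<in>set (ext_top c). orb y = orb B) \<longleftrightarrow> orb (last c) = orb (B - {x})"
    unfolding top using no_c orb_insert_x[OF lT assms(2)] by blast
  have "(\<exists>y\<in>set (ext_low c). orb y = orb B) \<longleftrightarrow> (\<exists>z\<in>set (butlast c). orb (insert x z) = orb B)"
    unfolding ext_low_def set_map by blast
  also have "\<dots> \<longleftrightarrow> (\<exists>z\<in>set (butlast c). orb z = orb (B - {x}))"
  proof (rule bex_cong[OF refl])
    fix z assume "z \<in> set (butlast c)"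
    hence "z \<subseteq> T" by (rule chain_sub_T[OF assms(1) in_set_butlastD])
    thus "orb (insert x z) = orb B \<longleftrightarrow> orb z = orb (B - {x})" by (rule orb_insert_x[OF _ assms(2)])
  qed
  finally show "(\<exists>y\<in>set (ext_low c). orb y = orb B) \<longleftrightarrow> (\<exists>y\<in>set (butlast c). orb y = orb (B - {x}))" .
qed

lemma ext_unique_without_x:
  assumes "B \<subseteq> T"
  shows "\<exists>!g. g \<in> ext_family C \<and> (\<exists>y\<in>set g. orb y = orb B)"
proof -
  have xB: "x \<notin> B" using assms x_new by blast
  obtain c where c: "c \<in> C" "\<exists>y\<in>set c. orb y = orb B"
    and u: "\<And>d. d \<in> C \<Longrightarrow> \<exists>y\<in>set d. orb y = orb B \<Longrightarrow> d = c"
    using scd_mod_unique[OF scd PowI[OF assms]] by blast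
  show ?thesis
  proof (rule ex1I[of _ "ext_top c"])
    show "ext_top c \<in> ext_family C \<and> (\<exists>y\<in>set (ext_top c). orb y = orb B)"
      using c ext_meets_without_x(1)[OF c(1) xB] unfolding ext_family_def by blast
  next
    fix g assume g: "g \<in> ext_family C \<and> (\<exists>y\<in>set g. orb y = orb B)"
    then consider d where "d \<in> C" "g = ext_top d" | d where "d \<in> C" "g = ext_low d"
      unfolding ext_family_def by blast
    thus "g = ext_top c"
    proof cases
      case 1
      thus ?thesis using g u ext_meets_without_x(1)[OF 1(1) xB] by blast
    next
      case 2
      thus ?thesis using g ext_meets_without_x(2)[OF 2(1) xB] by blast
    qed
  qed
qed

text \<open>A set \<open>B\<close> containing \<open>x\<close> is met by the top extension of the chain \<open>c\<close> through the
  orbit of \<open>B - {x}\<close> if that orbit is met at the top of \<open>c\<close>, and by the lower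
  extension of \<open>c\<close> otherwise.\<close>

definition ext_chain_for :: "'a set list \<Rightarrow> 'a set \<Rightarrow> 'a set list" where
  "ext_chain_for c y = (if y = last c then ext_top c else ext_low c)"

lemma same_orbit_same_chain:
  assumes "c \<in> C" "d \<in> C" "y \<in> set c" "z \<in> set d" "orb y = orb z"
  shows "c = d"
proof -
  have "y \<in> Pow T" using chain_sub_T[OF assms(1,3)] by blast
  from scd_mod_unique[OF scd this] show ?thesis using assms by blast
qed

lemma ext_chain_for_meets:
  assumes "c \<in> C" "y \<in> set c" "orb y = orb (B - {x})" "x \<in> B"
  shows "ext_chain_for c y \<in> ext_family C \<and> (\<exists>z\<in>set (ext_chain_for c y). orb z = orb B)"
proof (cases "y = last c")
  case True
  thus ?thesis using ext_meets_with_x(1)[OF assms(1,4)] assms(1,3)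
    unfolding ext_family_def ext_chain_for_def by auto
next
  case False
  have "c \<noteq> []" using scd_mod_chain(1)[OF scd assms(1)] .
  then obtain bs l where c_eq: "c = bs @ [l]" by (cases c rule: rev_cases) auto
  hence yb: "y \<in> set (butlast c)" using assms(2) False by simp
  hence "2 \<le> length c" using c_eq by (cases bs) auto
  thus ?thesis using False ext_meets_with_x(2)[OF assms(1,4)] yb assms(1,3)
    unfolding ext_family_def ext_chain_for_def by auto
qed

lemma ext_chain_for_unique:
  assumes c: "c \<in> C" "y \<in> set c" "orb y = orb (B - {x})" and "x \<in> B"
    and g: "g \<in> ext_family C" "\<exists>z\<in>set g. orb z = orb B"
  shows "g = ext_chain_for c y"
proof -
  note top = ext_meets_with_x(1)[OF _ assms(4)]
  note low = ext_meets_with_x(2)[OF _ assms(4)]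
  from g(1) consider d where "d \<in> C" "g = ext_top d" | d where "d \<in> C" "g = ext_low d"
    unfolding ext_family_def by blast
  thus ?thesis
  proof cases
    case 1
    hence last_d: "orb (last d) = orb (B - {x})" using g(2) top[OF 1(1)] by blast
    have "d \<noteq> []" using scd_mod_chain(1)[OF scd 1(1)] .
    hence "d = c" using same_orbit_same_chain[OF 1(1) c(1) last_in_set c(2)] last_d c(3) by simp
    hence "y = last c" using chain_orbit_unique[OF c(1,2) last_in_set] \<open>d \<noteq> []\<close> last_d c(3) by simp
    thus ?thesis using 1(2) \<open>d = c\<close> unfolding ext_chain_for_def by simp
  next
    case 2
    then obtain z where z: "z \<in> set (butlast d)" "orb z = orb (B - {x})" using g(2) low by blast
    have zd: "z \<in> set d" using z(1) by (rule in_set_butlastD)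
    hence "d = c" using same_orbit_same_chain[OF 2(1) c(1) _ c(2)] z(2) c(3) by simp
    hence "z = y" using chain_orbit_unique[OF c(1) _ c(2)] zd z(2) c(3) by simp
    hence "y \<noteq> last c"
      using graded_chain_butlast_less[OF scd_mod_chain(3)[OF scd c(1)]] z(1) \<open>d = c\<close> by blast
    thus ?thesis using 2(2) \<open>d = c\<close> unfolding ext_chain_for_def by simp
  qed
qed

lemma ext_unique_with_x:
  assumes "B \<subseteq> insert x T" "x \<in> B"
  shows "\<exists>!g. g \<in> ext_family C \<and> (\<exists>y\<in>set g. orb y = orb B)"
proof -
  have AT: "B - {x} \<subseteq> T" using assms(1) by blast
  obtain c y where c: "c \<in> C" "y \<in> set c" "orb y = orb (B - {x})"
    using scd_mod_unique[OF scd PowI[OF AT]] by blast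
  show ?thesis
  proof (rule ex1I[of _ "ext_chain_for c y"])
    show "ext_chain_for c y \<in> ext_family C \<and> (\<exists>z\<in>set (ext_chain_for c y). orb z = orb B)"
      by (rule ext_chain_for_meets[OF c assms(2)])
    show "g = ext_chain_for c y" if "g \<in> ext_family C \<and> (\<exists>z\<in>set g. orb z = orb B)" for g
      using ext_chain_for_unique[OF c assms(2)] that by blast
  qed
qed

theorem ext_scd: "scd_mod (Pow (insert x T)) orb (\<subseteq>) card (Suc N) (ext_family C)"
proof (rule scd_mod_intro)
  fix g assume "g \<in> ext_family C"
  then consider c where "c \<in> C" "g = ext_top c" | c where "c \<in> C" "2 \<le> length c" "g = ext_low c"
    unfolding ext_family_def by blast
  thus "symm_chain (Pow (insert x T)) (\<subseteq>) card (Suc N) g"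
    by cases (simp_all add: ext_top_chain ext_low_chain)
next
  fix B assume B: "B \<in> Pow (insert x T)"
  show "\<exists>!g. g \<in> ext_family C \<and> (\<exists>y\<in>set g. orb y = orb B)"
  proof (cases "x \<in> B")
    case True
    show ?thesis by (rule ext_unique_with_x[OF _ True]) (use B in blast)
  next
    case False
    hence "B \<subseteq> T" using B by blast
    thus ?thesis by (rule ext_unique_without_x)
  qed
qed

end

lemma scd_empty: "scd_mod (Pow {}) (inv_orbit \<rho>) (\<subseteq>) card 0 {[{}]}"
  unfolding scd_mod_def symm_chain_def graded_chain_def by auto

lemma scd_add_fixed_points:
  assumes invol: "\<And>y. \<rho> (\<rho> y) = y" and F: "finite F" "\<forall>x\<in>F. \<rho> x = x" "F \<inter> T = {}"
    and T: "finite T" "\<rho> ` T \<subseteq> T"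
    and scd: "scd_mod (Pow T) (inv_orbit \<rho>) (\<subseteq>) card N C"
  shows "\<exists>C'. scd_mod (Pow (T \<union> F)) (inv_orbit \<rho>) (\<subseteq>) card (N + card F) C'"
  using F
proof (induction F rule: finite_induct)
  case empty
  thus ?case using scd by auto
next
  case (insert x F)
  then obtain C1 where C1: "scd_mod (Pow (T \<union> F)) (inv_orbit \<rho>) (\<subseteq>) card (N + card F) C1"
    by auto
  interpret fixed_point_ext_scd \<rho> "T \<union> F" x "N + card F" C1
    using insert.prems insert.hyps T invol C1 by unfold_locales auto
  have "insert x (T \<union> F) = T \<union> insert x F" "Suc (N + card F) = N + card (insert x F)"
    using insert.hyps by auto
  thus ?case using ext_scd by metis
qed

lemma scd_boolean_lattice:
  assumes "finite L"
  shows "\<exists>C. scd_mod (Pow L) id (\<subseteq>) card (card L) C"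
proof -
  obtain C where C: "scd_mod (Pow L) (inv_orbit id) (\<subseteq>) card (card L) C"
    using scd_add_fixed_points[OF _ assms _ _ _ _ scd_empty, of id] by auto
  have "scd_mod (Pow L) id (\<subseteq>) card (card L) (map id ` C)"
    by (rule scd_mod_transfer[OF C]) (auto simp: inv_orbit_def)
  thus ?thesis by blast
qed

text \<open>The symmetric square of a finite decomposed set is decomposable; a numbering of the
  chains exists as they are determined by their first entries.\<close>

lemma scd_square_exists:
  assumes scd: "scd_mod S id st r N C" and fin: "finite S"
  shows "\<exists>C2. scd_mod (S \<times> S) upair (prod_step st) (prod_rank r) (2 * N) C2"
proof -
  have "inj_on hd C"
  proof
    fix c d assume cd: "c \<in> C" "d \<in> C" "hd c = hd d"
    have "hd c \<in> S" "hd c \<in> set c" "hd d \<in> set d"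
      using scd_mod_chain(1,2)[OF scd cd(1)] scd_mod_chain(1)[OF scd cd(2)] by auto
    thus "c = d" using scd_mod_unique[OF scd] cd by (metis id_apply)
  qed
  moreover have "hd ` C \<subseteq> S" using scd_mod_chain(1,2)[OF scd] by fastforce
  ultimately have "finite C" using fin by (metis finite_imageD finite_subset)
  then obtain h :: "'a list \<Rightarrow> nat" where "inj_on h C"
    using finite_imp_inj_to_nat_seg by blast
  then interpret scd_square S st r N C h using scd by unfold_locales
  show ?thesis using scd_square by blast
qed

locale perm_involution =
  fixes n :: nat and \<rho> :: "nat \<Rightarrow> nat"
  assumes perm: "\<rho> permutes {1..n}" and invol: "\<rho> \<circ> \<rho> = id"
begin

abbreviation P :: "nat set set set" where "P \<equiv> Bn_quot n {id, \<rho>}"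
abbreviation le :: "nat set set \<Rightarrow> nat set set \<Rightarrow> bool" where "le \<equiv> Bn_quot_le"
abbreviation orb :: "nat set \<Rightarrow> nat set set" where "orb \<equiv> inv_orbit \<rho>"

lemma rho_rho [simp]: "\<rho> (\<rho> i) = i"
  using fun_cong[OF invol, of i] by simp

lemma rho_image_image [simp]: "\<rho> ` \<rho> ` A = A"
  by (simp add: image_image)

lemma card_rho_image [simp]: "card (\<rho> ` A) = card A"
  by (metis card_image inj_onI rho_rho)

lemma rho_image_sub: "A \<subseteq> {1..n} \<Longrightarrow> \<rho> ` A \<subseteq> {1..n}"
  using permutes_in_image[OF perm] by auto

lemma orb_rho_image: "orb (\<rho> ` A) = orb A"
  unfolding inv_orbit_def by auto

lemma P_eq: "P = orb ` Pow {1..n}"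
proof -
  have "orbit_set {id, \<rho>} A = orb A" for A unfolding orbit_set_def inv_orbit_def by auto
  thus ?thesis unfolding Bn_quot_def by auto
qed

lemma orb_in_P: "A \<subseteq> {1..n} \<Longrightarrow> orb A \<in> P"
  using P_eq by auto

lemma mem_P:
  assumes "X \<in> P" "A \<in> X"
  shows "A \<subseteq> {1..n}" "X = orb A"
proof -
  obtain B where B: "B \<subseteq> {1..n}" "X = orb B" using assms(1) P_eq by auto
  hence "A = B \<or> A = \<rho> ` B" using assms(2) unfolding inv_orbit_def by auto
  thus "A \<subseteq> {1..n}" "X = orb A" using B rho_image_sub orb_rho_image by auto
qed

lemma le_orb: "le (orb A) (orb B) \<longleftrightarrow> A \<subseteq> B \<or> \<rho> ` A \<subseteq> B"
proof
  assume "le (orb A) (orb B)"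
  then obtain A' B' where ab: "A' \<in> {A, \<rho> ` A}" "B' \<in> {B, \<rho> ` B}" "A' \<subseteq> B'"
    unfolding Bn_quot_le_def inv_orbit_def by auto
  show "A \<subseteq> B \<or> \<rho> ` A \<subseteq> B"
  proof (cases "B' = B")
    case True thus ?thesis using ab by auto
  next
    case False
    hence "\<rho> ` A' \<subseteq> B" using ab by (metis image_mono insertE rho_image_image singletonD)
    thus ?thesis using ab(1) by auto
  qed
next
  assume "A \<subseteq> B \<or> \<rho> ` A \<subseteq> B"
  thus "le (orb A) (orb B)" unfolding Bn_quot_le_def inv_orbit_def by auto
qed

text \<open>The rank of an orbit is the common cardinality of its members.\<close>

definition orbit_card :: "nat set set \<Rightarrow> nat" where
  "orbit_card X = card (SOME A. A \<in> X)"

lemma orbit_card_orb [simp]: "orbit_card (orb A) = card A"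
proof -
  have "(SOME B. B \<in> orb A) \<in> orb A" by (rule someI[of _ A]) (simp add: inv_orbit_def)
  thus ?thesis unfolding orbit_card_def inv_orbit_def by auto
qed

lemma le_card:
  assumes "le (orb A) (orb B)" "B \<subseteq> {1..n}"
  shows "card A \<le> card B"
  using assms le_orb card_mono finite_subset[OF assms(2)] by (metis card_rho_image finite_atLeastAtMost)

lemma le_card_eq:
  assumes "le (orb A) (orb B)" "B \<subseteq> {1..n}" "card A = card B"
  shows "orb A = orb B"
proof -
  have fB: "finite B" using assms(2) finite_subset by blast
  from assms(1) consider "A \<subseteq> B" | "\<rho> ` A \<subseteq> B" using le_orb by blast
  thus ?thesis
  proof cases
    case 1 thus ?thesis using card_subset_eq[OF fB] assms(3) by metis
  next
    case 2
    hence "\<rho> ` A = B" using card_subset_eq[OF fB] assms(3) card_rho_image by metis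
    thus ?thesis using orb_rho_image by metis
  qed
qed

lemma poset: "poset_on P le"
  unfolding poset_on_def
proof (intro conjI ballI impI)
  fix X assume "X \<in> P"
  then obtain A where "X = orb A" using P_eq by auto
  thus "le X X" using le_orb by simp
next
  fix X Y assume XY: "X \<in> P" "Y \<in> P" "le X Y \<and> le Y X"
  obtain A B where A: "A \<subseteq> {1..n}" "X = orb A" and B: "B \<subseteq> {1..n}" "Y = orb B"
    using XY(1,2) P_eq by auto
  have "card A = card B" using le_card XY(3) A B by (meson le_antisym)
  thus "X = Y" using le_card_eq XY(3) A B by metis
next
  fix X Y Z assume XYZ: "X \<in> P" "Y \<in> P" "Z \<in> P" "le X Y \<and> le Y Z"
  obtain A B C where ABC: "X = orb A" "Y = orb B" "Z = orb C"
    using XYZ(1-3) P_eq by auto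
  hence h: "A \<subseteq> B \<or> \<rho> ` A \<subseteq> B" "B \<subseteq> C \<or> \<rho> ` B \<subseteq> C" using XYZ(4) le_orb by auto
  have "A \<subseteq> C \<or> \<rho> ` A \<subseteq> C"
  proof (cases "B \<subseteq> C")
    case True thus ?thesis using h(1) by blast
  next
    case False
    hence "\<rho> ` B \<subseteq> C" using h(2) by blast
    moreover have "\<rho> ` A \<subseteq> \<rho> ` B \<or> A \<subseteq> \<rho> ` B" using h(1) by (metis image_mono rho_image_image)
    ultimately show ?thesis by blast
  qed
  thus "le X Z" using le_orb ABC by simp
qed

lemma covers_intro:
  assumes "A \<subseteq> {1..n}" "B \<subseteq> {1..n}" "A \<subseteq> B" "card B = Suc (card A)"
  shows "covers P le (orb A) (orb B)"
  unfolding covers_def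
proof (intro conjI)
  show "orb A \<in> P" "orb B \<in> P" using orb_in_P assms by auto
  show "le (orb A) (orb B)" using le_orb assms by simp
  show "orb A \<noteq> orb B" using assms(4) orbit_card_orb by (metis n_not_Suc_n)
  show "\<not> (\<exists>z\<in>P. le (orb A) z \<and> orb A \<noteq> z \<and> le z (orb B) \<and> z \<noteq> orb B)"
  proof
    assume "\<exists>z\<in>P. le (orb A) z \<and> orb A \<noteq> z \<and> le z (orb B) \<and> z \<noteq> orb B"
    then obtain C where C: "C \<subseteq> {1..n}" "le (orb A) (orb C)" "orb A \<noteq> orb C"
      "le (orb C) (orb B)" "orb C \<noteq> orb B"
      using P_eq by auto
    have "card A \<le> card C" "card C \<le> card B" using le_card C assms(2) by auto
    moreover have "card A \<noteq> card C" "card C \<noteq> card B" using le_card_eq C assms(2) by metis+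
    ultimately show False using assms(4) by linarith
  qed
qed

lemma covers_rank:
  assumes "covers P le X Y"
  shows "orbit_card Y = Suc (orbit_card X)"
proof -
  have XY: "X \<in> P" "Y \<in> P" "le X Y" "X \<noteq> Y"
    and nz: "\<not> (\<exists>z\<in>P. le X z \<and> X \<noteq> z \<and> le z Y \<and> z \<noteq> Y)"
    using assms unfolding covers_def by auto
  obtain A B where ab: "A \<in> X" "B \<in> Y" "A \<subseteq> B" using XY(3) unfolding Bn_quot_le_def by auto
  have A: "A \<subseteq> {1..n}" "X = orb A" using mem_P[OF XY(1) ab(1)] by auto
  have B: "B \<subseteq> {1..n}" "Y = orb B" using mem_P[OF XY(2) ab(2)] by auto
  have fB: "finite B" using B(1) finite_subset by blast
  have ne: "A \<noteq> B" using XY(4) A B by auto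
  hence lt: "card A < card B" using ab(3) fB by (meson psubsetI psubset_card_mono)
  have "card B = Suc (card A)"
  proof (rule ccontr)
    assume "card B \<noteq> Suc (card A)"
    hence lt2: "Suc (card A) < card B" using lt by linarith
    obtain b where b: "b \<in> B" "b \<notin> A" using ab(3) ne by blast
    have fA: "finite A" using fB ab(3) finite_subset by blast
    have cZ: "card (insert b A) = Suc (card A)" using b fA by simp
    have "insert b A \<subseteq> {1..n}" using b B(1) A(1) by auto
    hence "orb (insert b A) \<in> P" by (rule orb_in_P)
    moreover have "le X (orb (insert b A))" "le (orb (insert b A)) Y"
      unfolding A(2) B(2) le_orb using b ab(3) by auto
    moreover have "X \<noteq> orb (insert b A)" "orb (insert b A) \<noteq> Y"
      unfolding A(2) B(2) using cZ lt2 by (metis orbit_card_orb n_not_Suc_n less_irrefl)+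
    ultimately show False using nz by blast
  qed
  thus ?thesis using A B by simp
qed

end

context perm_involution
begin

lemma is_min: "is_minimum P le (orb {})"
  unfolding is_minimum_def using orb_in_P P_eq le_orb by auto

lemma the_min: "(THE m. is_minimum P le m) = orb {}"
proof (rule the_equality)
  show "is_minimum P le (orb {})" by (rule is_min)
next
  fix m assume m: "is_minimum P le m"
  have "m \<in> P" "le m (orb {})" "le (orb {}) m" using m is_min unfolding is_minimum_def by auto
  thus "m = orb {}" using poset orb_in_P[of "{}"] unfolding poset_on_def by blast
qed

lemma saturated_rank:
  assumes "saturated_chain P le xs" "hd xs = orb {}" "i < length xs"
  shows "orbit_card (xs ! i) = i"
  using assms(3)
proof (induction i)
  case 0
  thus ?case using assms(1,2) unfolding saturated_chain_def by (simp add: hd_conv_nth)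
next
  case (Suc i)
  have "covers P le (xs ! i) (xs ! Suc i)" using assms(1) Suc(2) unfolding saturated_chain_def by blast
  thus ?case using covers_rank Suc by simp
qed

lemma saturated_length:
  assumes "saturated_chain P le xs" "hd xs = orb {}"
  shows "length xs = Suc (orbit_card (last xs))"
proof -
  have ne: "xs \<noteq> []" using assms(1) unfolding saturated_chain_def by simp
  have "orbit_card (xs ! (length xs - 1)) = length xs - 1" using saturated_rank[OF assms] ne by simp
  thus ?thesis using ne by (simp add: last_conv_nth)
qed

lemma saturated_snoc:
  assumes "saturated_chain P le xs" "covers P le (last xs) y"
  shows "saturated_chain P le (xs @ [y])"
  unfolding saturated_chain_def
proof (intro conjI allI impI)
  have ne: "xs \<noteq> []" using assms(1) unfolding saturated_chain_def by simp
  show "xs @ [y] \<noteq> []" by simp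
  show "set (xs @ [y]) \<subseteq> P" using assms unfolding saturated_chain_def covers_def by auto
  fix i assume i: "Suc i < length (xs @ [y])"
  show "covers P le ((xs @ [y]) ! i) ((xs @ [y]) ! Suc i)"
  proof (cases "Suc i < length xs")
    case True thus ?thesis using assms(1) unfolding saturated_chain_def by (simp add: nth_append)
  next
    case False
    hence "Suc i = length xs" using i by simp
    hence "i = length xs - 1" by simp
    hence "(xs @ [y]) ! i = last xs" "(xs @ [y]) ! Suc i = y"
      using ne \<open>Suc i = length xs\<close> by (auto simp: nth_append last_conv_nth)
    thus ?thesis using assms(2) by simp
  qed
qed

lemma saturated_exists:
  assumes "A \<subseteq> {1..n}"
  shows "\<exists>xs. saturated_chain P le xs \<and> hd xs = orb {} \<and> last xs = orb A"
proof -
  have "finite A" using assms finite_subset by blast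
  thus ?thesis using assms
  proof (induction A rule: finite_induct)
    case empty
    have "saturated_chain P le [orb {}]" unfolding saturated_chain_def using orb_in_P by simp
    moreover have "hd [orb {}] = orb {}" "last [orb {}] = orb {}" by simp_all
    ultimately show ?case by blast
  next
    case (insert a A)
    hence "A \<subseteq> {1..n}" by simp
    then obtain xs where xs: "saturated_chain P le xs" "hd xs = orb {}" "last xs = orb A"
      using insert.IH by blast
    have "covers P le (last xs) (orb (insert a A))"
      unfolding xs(3) by (rule covers_intro) (use insert in auto)
    hence "saturated_chain P le (xs @ [orb (insert a A)])" by (rule saturated_snoc[OF xs(1)])
    moreover have "xs \<noteq> []" using xs(1) unfolding saturated_chain_def by simp
    hence "hd (xs @ [orb (insert a A)]) = orb {}" "last (xs @ [orb (insert a A)]) = orb (insert a A)"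
      using xs(2) by simp_all
    ultimately show ?case by blast
  qed
qed

lemma ranked: "ranked P le"
  unfolding ranked_def using is_min saturated_length by metis

lemma rank_of_eq:
  assumes "X \<in> P"
  shows "rank_of P le X = orbit_card X"
proof -
  obtain A where A: "A \<subseteq> {1..n}" "X = orb A" using assms P_eq by auto
  obtain xs where xs: "saturated_chain P le xs" "hd xs = orb {}" "last xs = X"
    using saturated_exists[OF A(1)] A by auto
  show ?thesis unfolding rank_of_def the_min
  proof (rule the_equality)
    show "\<exists>xs. saturated_chain P le xs \<and> hd xs = orb {} \<and> last xs = X \<and> length xs = Suc (orbit_card X)"
      using xs saturated_length[OF xs(1,2)] by blast
  next
    fix k assume "\<exists>xs. saturated_chain P le xs \<and> hd xs = orb {} \<and> last xs = X \<and> length xs = Suc k"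
    thus "k = orbit_card X" using saturated_length by fastforce
  qed
qed

lemma poset_rank_eq: "poset_rank P le = n"
proof -
  have "rank_of P le ` P = orbit_card ` P" using rank_of_eq by (simp cong: image_cong)
  moreover have "Max (orbit_card ` P) = n"
  proof (rule Max_eqI)
    show "finite (orbit_card ` P)" using P_eq by simp
    fix y assume "y \<in> orbit_card ` P"
    then obtain A where "A \<subseteq> {1..n}" "y = card A" using P_eq by auto
    thus "y \<le> n" using card_mono[of "{1..n}" A] by simp
  next
    have "card {1..n} = n" by simp
    thus "n \<in> orbit_card ` P" using orb_in_P[of "{1..n}"] by (metis image_eqI order_refl orbit_card_orb)
  qed
  ultimately show ?thesis unfolding poset_rank_def by simp
qed

lemma orbit_chain_symmetric:
  assumes "symm_chain (Pow {1..n}) (\<subseteq>) card n c"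
  shows "symmetric_chain P le (map orb c)"
proof -
  have cc: "c \<noteq> []" "set c \<subseteq> Pow {1..n}" "graded_chain (\<subseteq>) card c" "card (hd c) + card (last c) = n"
    using assms unfolding symm_chain_def by auto
  have "saturated_chain P le (map orb c)"
    unfolding saturated_chain_def
  proof (intro conjI allI impI)
    show "map orb c \<noteq> []" using cc by simp
    show "set (map orb c) \<subseteq> P" using cc(2) orb_in_P by auto
    fix i assume i: "Suc i < length (map orb c)"
    hence "c ! i \<in> set c" "c ! Suc i \<in> set c" by auto
    hence "c ! i \<subseteq> {1..n}" "c ! Suc i \<subseteq> {1..n}" using cc(2) by auto
    moreover have "c ! i \<subseteq> c ! Suc i \<and> card (c ! Suc i) = Suc (card (c ! i))"
      using cc(3) i unfolding graded_chain_def by simp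
    ultimately show "covers P le (map orb c ! i) (map orb c ! Suc i)" using covers_intro i by simp
  qed
  moreover have "hd c \<in> set c" "last c \<in> set c" using cc(1) by auto
  hence "orb (hd c) \<in> P" "orb (last c) \<in> P" using cc(2) orb_in_P by auto
  ultimately show ?thesis unfolding symmetric_chain_def
    using rank_of_eq poset_rank_eq cc(1,4) by (simp add: hd_map last_map)
qed

theorem SCO_of_scd:
  assumes scd: "scd_mod (Pow {1..n}) orb (\<subseteq>) card n C"
  shows "SCO P le"
  unfolding SCO_def
proof (intro conjI exI[of _ "map orb ` C"] ballI)
  show "finite P" using P_eq by simp
  show "poset_on P le" by (rule poset)
  show "ranked P le" by (rule ranked)
  show "symmetric_chain P le c'" if "c' \<in> map orb ` C" for c'
    using that orbit_chain_symmetric scd unfolding scd_mod_def by blast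
  fix X assume "X \<in> P"
  then obtain A where A: "A \<subseteq> {1..n}" "X = orb A" using P_eq by auto
  obtain c where c: "c \<in> C" "\<exists>y\<in>set c. orb y = orb A"
    and u: "\<And>d. d \<in> C \<Longrightarrow> \<exists>y\<in>set d. orb y = orb A \<Longrightarrow> d = c"
    using scd_mod_unique[OF scd PowI[OF A(1)]] by blast
  show "\<exists>!c'. c' \<in> map orb ` C \<and> X \<in> set c'"
  proof (rule ex1I[of _ "map orb c"])
    show "map orb c \<in> map orb ` C \<and> X \<in> set (map orb c)" using c A(2) by auto
  next
    fix d' assume "d' \<in> map orb ` C \<and> X \<in> set d'"
    then obtain d y where "d \<in> C" "d' = map orb d" "y \<in> set d" "orb y = orb A" using A(2) by auto
    thus "d' = map orb c" using u by blast
  qed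
qed

end

context perm_involution
begin

definition low_pts :: "nat set" where "low_pts = {i \<in> {1..n}. i < \<rho> i}"
definition high_pts :: "nat set" where "high_pts = {i \<in> {1..n}. \<rho> i < i}"
definition fixed_pts :: "nat set" where "fixed_pts = {i \<in> {1..n}. \<rho> i = i}"

lemma high_pts_eq: "high_pts = \<rho> ` low_pts"
proof
  have in_n: "\<rho> i \<in> {1..n} \<longleftrightarrow> i \<in> {1..n}" for i using permutes_in_image[OF perm] .
  show "high_pts \<subseteq> \<rho> ` low_pts"
  proof
    fix i assume "i \<in> high_pts"
    hence "i \<in> {1..n}" "\<rho> i < \<rho> (\<rho> i)" unfolding high_pts_def by auto
    hence "\<rho> i \<in> low_pts" unfolding low_pts_def using in_n[of i] by blast
    thus "i \<in> \<rho> ` low_pts" by (metis image_eqI rho_rho)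
  qed
  show "\<rho> ` low_pts \<subseteq> high_pts"
  proof
    fix i assume "i \<in> \<rho> ` low_pts"
    then obtain j where j: "j \<in> {1..n}" "j < \<rho> j" "i = \<rho> j" unfolding low_pts_def by blast
    hence "i \<in> {1..n}" "\<rho> i < i" using in_n[of j] by simp_all
    thus "i \<in> high_pts" unfolding high_pts_def by blast
  qed
qed

lemma pts_disjoint: "low_pts \<inter> high_pts = {}" "fixed_pts \<inter> (low_pts \<union> high_pts) = {}"
  unfolding low_pts_def high_pts_def fixed_pts_def by auto

lemma pts_cover: "(low_pts \<union> high_pts) \<union> fixed_pts = {1..n}"
  unfolding low_pts_def high_pts_def fixed_pts_def by auto

lemma pts_finite: "finite low_pts" "finite high_pts" "finite fixed_pts"
  unfolding low_pts_def high_pts_def fixed_pts_def by auto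

text \<open>A subset of the moved points is encoded by its lower part together with the mirror
  image of its upper part; \<open>\<rho>\<close> acts on these pairs by swapping the coordinates.\<close>

definition glue :: "nat set \<times> nat set \<Rightarrow> nat set" where
  "glue p = fst p \<union> \<rho> ` snd p"

lemma glue_eq_iff:
  assumes "X \<subseteq> low_pts" "Y \<subseteq> low_pts" "X' \<subseteq> low_pts" "Y' \<subseteq> low_pts"
  shows "glue (X, Y) = glue (X', Y') \<longleftrightarrow> X = X' \<and> Y = Y'"
proof -
  have parts: "glue (U, V) \<inter> low_pts = U" "\<rho> ` (glue (U, V) \<inter> high_pts) = V"
    if "U \<subseteq> low_pts" "V \<subseteq> low_pts" for U V
  proof -
    have "\<rho> ` V \<subseteq> high_pts" using that(2) high_pts_eq by auto
    hence "glue (U, V) \<inter> low_pts = U" "glue (U, V) \<inter> high_pts = \<rho> ` V"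
      using that pts_disjoint(1) unfolding glue_def by auto
    thus "glue (U, V) \<inter> low_pts = U" "\<rho> ` (glue (U, V) \<inter> high_pts) = V" by simp_all
  qed
  show ?thesis using parts[OF assms(1,2)] parts[OF assms(3,4)] by metis
qed

lemma glue_image: "glue ` (Pow low_pts \<times> Pow low_pts) = Pow (low_pts \<union> high_pts)"
proof
  show "glue ` (Pow low_pts \<times> Pow low_pts) \<subseteq> Pow (low_pts \<union> high_pts)"
    using high_pts_eq unfolding glue_def by auto
  show "Pow (low_pts \<union> high_pts) \<subseteq> glue ` (Pow low_pts \<times> Pow low_pts)"
  proof
    fix A assume A: "A \<in> Pow (low_pts \<union> high_pts)"
    have "glue (A \<inter> low_pts, \<rho> ` (A \<inter> high_pts)) = A" using A unfolding glue_def by auto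
    moreover have "\<rho> ` (A \<inter> high_pts) \<subseteq> low_pts" using high_pts_eq by auto
    ultimately show "A \<in> glue ` (Pow low_pts \<times> Pow low_pts)" by (metis IntE PowI SigmaI image_eqI subsetI)
  qed
qed

lemma glue_card:
  assumes "X \<subseteq> low_pts" "Y \<subseteq> low_pts"
  shows "card (glue (X, Y)) = card X + card Y"
proof -
  have "finite X" "finite Y" using assms pts_finite(1) finite_subset by auto
  hence "finite X" "finite (\<rho> ` Y)" by simp_all
  moreover have "X \<inter> \<rho> ` Y = {}" using assms pts_disjoint(1) high_pts_eq by auto
  ultimately show ?thesis unfolding glue_def by (simp add: card_Un_disjoint)
qed

lemma glue_orbit:
  assumes "X \<subseteq> low_pts" "Y \<subseteq> low_pts" "X' \<subseteq> low_pts" "Y' \<subseteq> low_pts"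
  shows "orb (glue (X, Y)) = orb (glue (X', Y')) \<longleftrightarrow> {X, Y} = {X', Y'}"
proof -
  have orbit: "orb (glue (U, V)) = {glue (U, V), glue (V, U)}" for U V
    unfolding inv_orbit_def glue_def by (simp add: image_Un Un_commute)
  show ?thesis unfolding orbit doubleton_eq_iff using assms by (simp add: glue_eq_iff) blast
qed

text \<open>Hence the quotient of the Boolean lattice on the moved points is the symmetric square
  of the Boolean lattice on the lower points.\<close>

lemma scd_moved_points: "\<exists>C. scd_mod (Pow (low_pts \<union> high_pts)) orb (\<subseteq>) card (2 * card low_pts) C"
proof -
  obtain CB where "scd_mod (Pow low_pts) id (\<subseteq>) card (card low_pts) CB"
    using scd_boolean_lattice pts_finite(1) by blast
  then obtain C2 where C2: "scd_mod (Pow low_pts \<times> Pow low_pts) upair (prod_step (\<subseteq>)) (prod_rank card)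
      (2 * card low_pts) C2"
    using scd_square_exists pts_finite(1) by blast
  have "scd_mod (Pow (low_pts \<union> high_pts)) orb (\<subseteq>) card (2 * card low_pts) (map glue ` C2)"
  proof (rule scd_mod_transfer[OF C2 glue_image])
    show "glue x \<subseteq> glue y" if "prod_step (\<subseteq>) x y" for x y
      using that unfolding glue_def by (auto split: prod.splits)
    show "card (glue x) = prod_rank card x" if "x \<in> Pow low_pts \<times> Pow low_pts" for x
      using that glue_card by auto
    show "orb (glue x) = orb (glue y) \<longleftrightarrow> upair x = upair y"
      if "x \<in> Pow low_pts \<times> Pow low_pts" "y \<in> Pow low_pts \<times> Pow low_pts" for x y
    proof -
      obtain X Y X' Y' where "x = (X, Y)" "y = (X', Y')" by fastforce
      thus ?thesis using that glue_orbit[of X Y X' Y'] by simp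
    qed
  qed
  thus ?thesis by blast
qed

lemma card_quotient_pts: "2 * card low_pts + card fixed_pts = n"
proof -
  have "card high_pts = card low_pts" using high_pts_eq by simp
  hence "card (low_pts \<union> high_pts) = 2 * card low_pts"
    using card_Un_disjoint[OF pts_finite(1,2) pts_disjoint(1)] by simp
  moreover have "card ((low_pts \<union> high_pts) \<union> fixed_pts) = card (low_pts \<union> high_pts) + card fixed_pts"
    using pts_finite pts_disjoint(2) by (subst card_Un_disjoint) auto
  ultimately show ?thesis unfolding pts_cover by simp
qed

lemma scd_quotient: "\<exists>C. scd_mod (Pow {1..n}) orb (\<subseteq>) card n C"
proof -
  obtain C0 where C0: "scd_mod (Pow (low_pts \<union> high_pts)) orb (\<subseteq>) card (2 * card low_pts) C0"
    using scd_moved_points by blast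
  have "\<exists>C. scd_mod (Pow ((low_pts \<union> high_pts) \<union> fixed_pts)) orb (\<subseteq>) card
      (2 * card low_pts + card fixed_pts) C"
  proof (rule scd_add_fixed_points[OF _ pts_finite(3) _ _ _ _ C0])
    show "\<rho> ` (low_pts \<union> high_pts) \<subseteq> low_pts \<union> high_pts" using high_pts_eq by auto
    show "\<forall>x\<in>fixed_pts. \<rho> x = x" unfolding fixed_pts_def by simp
    show "fixed_pts \<inter> (low_pts \<union> high_pts) = {}" by (rule pts_disjoint(2))
    show "finite (low_pts \<union> high_pts)" using pts_finite by simp
  qed simp
  thus ?thesis unfolding pts_cover card_quotient_pts .
qed

end

theorem theorem2p5:
  fixes n :: nat and \<rho> :: "nat \<Rightarrow> nat"
  assumes "\<rho> permutes {1..n}"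
    and "\<rho> \<noteq> id"
    and "\<rho> \<circ> \<rho> = id"
  shows "SCO (Bn_quot n {id, \<rho>}) Bn_quot_le"
proof -
  interpret perm_involution n \<rho> using assms(1,3) by unfold_locales
  obtain C where "scd_mod (Pow {1..n}) (inv_orbit \<rho>) (\<subseteq>) card n C" using scd_quotient by blast
  thus ?thesis by (rule SCO_of_scd)
qed

end
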